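(* Let $(L,\le,(\sqsubseteq_\alpha)_{\alpha<\kappa})$ be a model of Axioms 1–4. For all $x,y\in L$ and $\alpha<\kappa$: - $x=_\alpha y$ iff $x|_\alpha=_\alpha y|_\alpha$ iff $x|_\alpha=y|_\alpha$; - $x\sqsubset_\alpha y$ iff $x|_\alpha\sqsubset_\alpha y|_\alpha$; - $x\sqsubseteq_\alpha y$ iff $x|_\alpha\sqsubseteq_\alpha y|_\alpha$.
   Context: Setting (model of Axioms 1–4). Let $(L,\le)$ be a complete lattice with join operation $\bigvee$ and least element $\perp$. Let $\kappa>0$ be an ordinal, and for each ordinal $\alpha<\kappa$ let $\sqsubseteq_\alpha$ be a preorder on $L$. Derived relations: - $x=_\alpha y$ means $x\sqsubseteq_\alpha y$ and $y\sqsubseteq_\alpha x$. - $x\sqsubset_\alpha y$ means $x\sqsubseteq_\alpha y$ and not $x=_\alpha y$. Derived set, for $x\in L$ and $\alpha<\kappa$: $(x]_\alpha=\{y\in L:\forall\beta<\alpha,\ x=_\beta y\}$. For a set $X$, $X\sqsubseteq_\alpha y$ means $x\sqsubseteq_\alpha y$ for all $x\in X$. The structure is a model of Axioms 1–4 if: - (A1) for all $\alpha<\beta<\kappa$, $x\sqsubseteq_\beta y$ implies $x=_\alpha y$; - (A2) $\bigcap_{\alpha<\kappa}=_\alpha$ is the identity relation on $L$; - (A3) for every $x\in L$, every $\alpha<\kappa$ and every $X\subseteq(x]_\alpha$ there is $y\in(x]_\alpha$ with $X\sqsubseteq_\alpha y$ such that for all $z\in(x]_\alpha$ with $X\sqsubseteq_\alpha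 z$ we have $y\sqsubseteq_\alpha z$ and $y\le z$; - (A4) for every nonempty $X\subseteq L$, every $\alpha<\kappa$ and every $y\in L$, if $y=_\alpha x$ for all $x\in X$ then $y=_\alpha\bigvee X$. The element $y$ of (A3) is unique and is denoted $\bigsqcup_\alpha X$. The slice of $x$ at $\alpha$ is $x|_\alpha:=\bigsqcup_\alpha\{x\}$, where $\{x\}\subseteq(x]_\alpha$. *)

theory Defs
  imports Main
begin

text \<open>The ordinal kappa > 0 is represented by a (nonempty) well-ordered index type 'i:
its elements are exactly the ordinals alpha < kappa. The family of preorders is
sq :: 'i => 'a => 'a => bool, where sq alpha x y means x below_alpha y.\<close>

definition eqa :: "('i \<Rightarrow> 'a \<Rightarrow> 'a \<Rightarrow> bool) \<Rightarrow> 'i \<Rightarrow> 'a \<Rightarrow> 'a \<Rightarrow> bool" where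
  "eqa sq \<alpha> x y \<longleftrightarrow> sq \<alpha> x y \<and> sq \<alpha> y x"

definition lta :: "('i \<Rightarrow> 'a \<Rightarrow> 'a \<Rightarrow> bool) \<Rightarrow> 'i \<Rightarrow> 'a \<Rightarrow> 'a \<Rightarrow> bool" where
  "lta sq \<alpha> x y \<longleftrightarrow> sq \<alpha> x y \<and> \<not> eqa sq \<alpha> x y"

definition down :: "('i::wellorder \<Rightarrow> 'a \<Rightarrow> 'a \<Rightarrow> bool) \<Rightarrow> 'a \<Rightarrow> 'i \<Rightarrow> 'a set" where
  "down sq x \<alpha> = {y. \<forall>\<beta><\<alpha>. eqa sq \<beta> x y}"

definition model_A14 :: "('i::wellorder \<Rightarrow> 'a::complete_lattice \<Rightarrow> 'a \<Rightarrow> bool) \<Rightarrow> bool" where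
  "model_A14 sq \<longleftrightarrow>
     (\<forall>\<alpha>. reflp (sq \<alpha>) \<and> transp (sq \<alpha>)) \<and>
     (\<forall>\<alpha> \<beta> x y. \<alpha> < \<beta> \<longrightarrow> sq \<beta> x y \<longrightarrow> eqa sq \<alpha> x y) \<and>
     (\<forall>x y. (\<forall>\<alpha>. eqa sq \<alpha> x y) \<longleftrightarrow> x = y) \<and>
     (\<forall>x \<alpha> X. X \<subseteq> down sq x \<alpha> \<longrightarrow>
        (\<exists>y\<in>down sq x \<alpha>. (\<forall>w\<in>X. sq \<alpha> w y) \<and>
           (\<forall>z\<in>down sq x \<alpha>. (\<forall>w\<in>X. sq \<alpha> w z) \<longrightarrow> sq \<alpha> y z \<and> y \<le> z))) \<and>
     (\<forall>X \<alpha> y. X \<noteq> {} \<longrightarrow> (\<forall>x\<in>X. eqa sq \<alpha> y x) \<longrightarrow> eqa sq \<alpha> y (Sup X))"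

text \<open>The element of Axiom 3 for x, alpha, X (unique when X is a subset of (x]_alpha).\<close>
definition bsup :: "('i::wellorder \<Rightarrow> 'a::complete_lattice \<Rightarrow> 'a \<Rightarrow> bool) \<Rightarrow> 'i \<Rightarrow> 'a \<Rightarrow> 'a set \<Rightarrow> 'a" where
  "bsup sq \<alpha> x X = (THE y. y \<in> down sq x \<alpha> \<and> (\<forall>w\<in>X. sq \<alpha> w y) \<and>
           (\<forall>z\<in>down sq x \<alpha>. (\<forall>w\<in>X. sq \<alpha> w z) \<longrightarrow> sq \<alpha> y z \<and> y \<le> z))"

definition slice :: "('i::wellorder \<Rightarrow> 'a::complete_lattice \<Rightarrow> 'a \<Rightarrow> bool) \<Rightarrow> 'i \<Rightarrow> 'a \<Rightarrow> 'a" where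
  "slice sq \<alpha> x = bsup sq \<alpha> x {x}"

end

theory Submission
  imports Defs
begin

text \<open>
  The slice \<open>x|\<alpha>\<close> is the least upper bound, within the cone \<open>(x]\<alpha>\<close>, of \<open>{x}\<close>
  (Axiom 3).  The theorem rests on two facts about it:
  \<^item> \<open>x|\<alpha> =\<alpha> x\<close>, because \<open>x\<close> itself lies in \<open>(x]\<alpha>\<close> and is an upper bound of \<open>{x}\<close>,
    so \<open>x \<sqsubseteq>\<alpha> x|\<alpha> \<sqsubseteq>\<alpha> x\<close>;
  \<^item> \<open>x =\<alpha> y\<close> implies \<open>x|\<alpha> = y|\<alpha>\<close>: by Axiom 1, \<open>x =\<alpha> y\<close> gives \<open>x =\<beta> y\<close> for all
    \<open>\<beta> < \<alpha>\<close>, hence \<open>(x]\<alpha> = (y]\<alpha>\<close>, and the two slices are then lattice-below each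
    other by the minimality clause of Axiom 3.
  Since \<open>\<sqsubseteq>\<alpha>\<close> is a preorder, the first fact makes \<open>\<sqsubseteq>\<alpha>\<close>, \<open>=\<alpha>\<close> and \<open>\<sqsubset>\<alpha>\<close> invariant
  under replacing \<open>x, y\<close> by their slices; the second upgrades \<open>=\<alpha>\<close> between slices
  to equality.  The file first derives the elementary consequences of the axioms,
  then characterises the Axiom 3 element \<open>bsup\<close>, specialises it to slices, and
  finally assembles the theorem.
\<close>

context
  fixes sq :: "'i::wellorder \<Rightarrow> 'a::complete_lattice \<Rightarrow> 'a \<Rightarrow> bool"
  assumes model: "model_A14 sq"
begin

lemma sq_refl: "sq \<alpha> u u"
  using model unfolding model_A14_def by (meson reflpD)

lemma sq_trans: "sq \<alpha> u v \<Longrightarrow> sq \<alpha> v w \<Longrightarrow> sq \<alpha> u w"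
  using model unfolding model_A14_def by (meson transpD)

lemma eqa_refl: "eqa sq \<alpha> u u"
  by (simp add: eqa_def sq_refl)

lemma eqa_sym: "eqa sq \<alpha> u v \<Longrightarrow> eqa sq \<alpha> v u"
  by (simp add: eqa_def)

lemma eqa_trans: "eqa sq \<alpha> u v \<Longrightarrow> eqa sq \<alpha> v w \<Longrightarrow> eqa sq \<alpha> u w"
  unfolding eqa_def using sq_trans by blast

lemma sq_imp_eqa_below: "\<beta> < \<gamma> \<Longrightarrow> sq \<gamma> u v \<Longrightarrow> eqa sq \<beta> u v"
  using model unfolding model_A14_def by meson

lemma axiom3:
  assumes "X \<subseteq> down sq x \<alpha>"
  shows "\<exists>y\<in>down sq x \<alpha>. (\<forall>w\<in>X. sq \<alpha> w y) \<and>
           (\<forall>z\<in>down sq x \<alpha>. (\<forall>w\<in>X. sq \<alpha> w z) \<longrightarrow> sq \<alpha> y z \<and> y \<le> z)"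
  using model assms unfolding model_A14_def by blast

lemma self_in_down: "x \<in> down sq x \<alpha>"
  by (simp add: down_def eqa_refl)

lemma down_cong:
  assumes "eqa sq \<alpha> x y"
  shows "down sq x \<alpha> = down sq y \<alpha>"
proof -
  have below: "eqa sq \<beta> x y" if "\<beta> < \<alpha>" for \<beta>
    using assms that sq_imp_eqa_below unfolding eqa_def by blast
  show ?thesis
    unfolding down_def using below eqa_sym eqa_trans by blast
qed

text \<open>The element postulated by Axiom 3 is unique (the lattice order is antisymmetric),
  so it is \<open>bsup\<close>, and \<open>bsup\<close> enjoys its defining properties.\<close>

lemma bsup_props:
  assumes "X \<subseteq> down sq x \<alpha>"
  shows "bsup sq \<alpha> x X \<in> down sq x \<alpha>"
    and "\<forall>w\<in>X. sq \<alpha> w (bsup sq \<alpha> x X)"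
    and "\<forall>z\<in>down sq x \<alpha>. (\<forall>w\<in>X. sq \<alpha> w z) \<longrightarrow>
           sq \<alpha> (bsup sq \<alpha> x X) z \<and> bsup sq \<alpha> x X \<le> z"
proof -
  let ?P = "\<lambda>y. y \<in> down sq x \<alpha> \<and> (\<forall>w\<in>X. sq \<alpha> w y) \<and>
           (\<forall>z\<in>down sq x \<alpha>. (\<forall>w\<in>X. sq \<alpha> w z) \<longrightarrow> sq \<alpha> y z \<and> y \<le> z)"
  obtain y where y: "?P y"
    using axiom3[OF assms] by blast
  have unique: "y' = y" if "?P y'" for y'
    using that y by (meson antisym)
  have "bsup sq \<alpha> x X = y"
    unfolding bsup_def using y unique by (rule the_equality)
  with y show "bsup sq \<alpha> x X \<in> down sq x \<alpha>"
    and "\<forall>w\<in>X. sq \<alpha> w (bsup sq \<alpha> x X)"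
    and "\<forall>z\<in>down sq x \<alpha>. (\<forall>w\<in>X. sq \<alpha> w z) \<longrightarrow>
           sq \<alpha> (bsup sq \<alpha> x X) z \<and> bsup sq \<alpha> x X \<le> z"
    by simp_all
qed

lemma slice_eqa: "eqa sq \<alpha> x (slice sq \<alpha> x)"
proof -
  have sub: "{x} \<subseteq> down sq x \<alpha>"
    by (simp add: self_in_down)
  have "sq \<alpha> x (slice sq \<alpha> x)"
    using bsup_props(2)[OF sub] unfolding slice_def by simp
  moreover have "sq \<alpha> (slice sq \<alpha> x) x"
    using bsup_props(3)[OF sub] self_in_down sq_refl unfolding slice_def by simp
  ultimately show ?thesis
    by (simp add: eqa_def)
qed

lemma slice_least:
  assumes "z \<in> down sq x \<alpha>" and "sq \<alpha> x z"
  shows "slice sq \<alpha> x \<le> z"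
proof -
  have sub: "{x} \<subseteq> down sq x \<alpha>"
    by (simp add: self_in_down)
  show ?thesis
    using bsup_props(3)[OF sub] assms unfolding slice_def by simp
qed

text \<open>\<open>=\<alpha>\<close>-equivalent elements have the same slice: each slice is lattice-below the
  other, since both live in the common cone and are \<open>\<sqsubseteq>\<alpha>\<close>-above both elements.\<close>

lemma slice_le_of_eqa:
  assumes "eqa sq \<alpha> x y"
  shows "slice sq \<alpha> x \<le> slice sq \<alpha> y"
proof (rule slice_least)
  have "slice sq \<alpha> y \<in> down sq y \<alpha>"
    using bsup_props(1) self_in_down unfolding slice_def by simp
  then show "slice sq \<alpha> y \<in> down sq x \<alpha>"
    using down_cong[OF assms] by simp
  show "sq \<alpha> x (slice sq \<alpha> y)"
    using eqa_trans[OF assms slice_eqa] unfolding eqa_def by simp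
qed

lemma slice_cong: "eqa sq \<alpha> x y \<Longrightarrow> slice sq \<alpha> x = slice sq \<alpha> y"
  by (meson antisym eqa_sym slice_le_of_eqa)

lemma sq_eqa_invariant:
  assumes "eqa sq \<alpha> x x'" and "eqa sq \<alpha> y y'"
  shows "sq \<alpha> x y \<longleftrightarrow> sq \<alpha> x' y'"
  using assms sq_trans unfolding eqa_def by blast

end

theorem mainTheorem7:
  fixes sq :: "'i::wellorder \<Rightarrow> 'a::complete_lattice \<Rightarrow> 'a \<Rightarrow> bool"
  assumes "model_A14 sq"
  shows "(eqa sq \<alpha> x y \<longleftrightarrow> eqa sq \<alpha> (slice sq \<alpha> x) (slice sq \<alpha> y)) \<and>
         (eqa sq \<alpha> (slice sq \<alpha> x) (slice sq \<alpha> y) \<longleftrightarrow> slice sq \<alpha> x = slice sq \<alpha> y) \<and>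
         (lta sq \<alpha> x y \<longleftrightarrow> lta sq \<alpha> (slice sq \<alpha> x) (slice sq \<alpha> y)) \<and>
         (sq \<alpha> x y \<longleftrightarrow> sq \<alpha> (slice sq \<alpha> x) (slice sq \<alpha> y))"
proof -
  note ex = slice_eqa[OF assms, of \<alpha> x] and ey = slice_eqa[OF assms, of \<alpha> y]
  have le: "sq \<alpha> x y \<longleftrightarrow> sq \<alpha> (slice sq \<alpha> x) (slice sq \<alpha> y)"
    using sq_eqa_invariant[OF assms ex ey] .
  have ge: "sq \<alpha> y x \<longleftrightarrow> sq \<alpha> (slice sq \<alpha> y) (slice sq \<alpha> x)"
    using sq_eqa_invariant[OF assms ey ex] .
  have eq: "eqa sq \<alpha> x y \<longleftrightarrow> eqa sq \<alpha> (slice sq \<alpha> x) (slice sq \<alpha> y)"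
    using le ge unfolding eqa_def by blast
  have eq_slices: "eqa sq \<alpha> (slice sq \<alpha> x) (slice sq \<alpha> y) \<longleftrightarrow> slice sq \<alpha> x = slice sq \<alpha> y"
    using eq slice_cong[OF assms, of \<alpha> x y] eqa_refl[OF assms] by metis
  have lt: "lta sq \<alpha> x y \<longleftrightarrow> lta sq \<alpha> (slice sq \<alpha> x) (slice sq \<alpha> y)"
    using le eq unfolding lta_def by blast
  show ?thesis
    using eq eq_slices lt le by blast
qed

end
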